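(* Let $x_1,\dots,x_N\in\mathbb{R}^n$ be used directly as tokens, and consider a linear-attention layer with linear per-token maps $q_j=W_Q^\top x_j$, $k_i=W_K^\top x_i$, $v_i=W_V^\top x_i$ and outputs $o_j=\sum_{i=1}^N\langle q_j,k_i\rangle v_i$. Then, with $M=W_QW_K^\top$, $$o_j=\Big[\sum_{i=1}^N (W_V^\top x_i)x_i^\top\Big]M^\top x_j,$$ so $o_j$ is linear in $x_j$ times a quadratic function of $\{x_i\}$ and is odd under the global sign flip $x_i\mapsto -x_i$ (for all $i$ simultaneously): $o_j\mapsto -o_j$. Consequently, neither such a layer nor any finite stack of such layers (each layer's outputs serving as the next layer's tokens) can produce an output equal to a nonzero statistic that is invariant under the global flip, such as $\sum_{i=1}^N x_ix_i^\top$.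
   Context: Linear attention here means attention without softmax: the output at token $j$ is the sum over all tokens $i$ of the inner product of the query of $j$ with the key of $i$, times the value of $i$. "Pure data tokens" means there are no constant channels or extra tokens beyond the $x_i$. *)

theory Defs
  imports Complex_Main
begin

text \<open>A token sequence is X :: nat => nat => real, where X i k is the
 k-th coordinate of token x_i (relevant range i < N, k < current dimension).
 A matrix W :: nat => nat => real has entries W a b (row a, column b).
 Dimensions are explicit natural numbers, since they change from layer to layer.\<close>

type_synonym tokens = "nat \<Rightarrow> nat \<Rightarrow> real"
type_synonym rmat = "nat \<Rightarrow> nat \<Rightarrow> real"

definition mat_T_vec :: "nat \<Rightarrow> rmat \<Rightarrow> (nat \<Rightarrow> real) \<Rightarrow> nat \<Rightarrow> real" where
  "mat_T_vec n W x c = (\<Sum>a<n. W a c * x a)"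

definition inner_d :: "nat \<Rightarrow> (nat \<Rightarrow> real) \<Rightarrow> (nat \<Rightarrow> real) \<Rightarrow> real" where
  "inner_d d u v = (\<Sum>a<d. u a * v a)"

definition linattn :: "nat \<Rightarrow> nat \<Rightarrow> nat \<Rightarrow> rmat \<Rightarrow> rmat \<Rightarrow> rmat \<Rightarrow> tokens \<Rightarrow> tokens" where
  "linattn N n d WQ WK WV X j c =
     (\<Sum>i<N. inner_d d (mat_T_vec n WQ (X j)) (mat_T_vec n WK (X i)) * mat_T_vec n WV (X i) c)"

definition flip :: "tokens \<Rightarrow> tokens" where
  "flip X = (\<lambda>i k. - X i k)"

record layer =
  qk_dim :: nat
  out_dim :: nat
  WQ :: rmat
  WK :: rmat
  WV :: rmat

fun stack_out :: "nat \<Rightarrow> nat \<Rightarrow> layer list \<Rightarrow> tokens \<Rightarrow> tokens" where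
  "stack_out N n [] X = X"
| "stack_out N n (L # Ls) X =
     stack_out N (out_dim L) Ls (linattn N n (qk_dim L) (WQ L) (WK L) (WV L) X)"

fun final_dim :: "nat \<Rightarrow> layer list \<Rightarrow> nat" where
  "final_dim n [] = n"
| "final_dim n (L # Ls) = final_dim (out_dim L) Ls"

end

theory Submission
  imports Defs
begin

text \<open>A linear attention layer is a homogeneous cubic map of the tokens (queries, keys and values
  are each linear in them), so the global sign flip, which is scaling by -1, changes the sign of
  every output; by induction the same holds for any stack of layers. A statistic that is invariant
  under the flip and equal to such an odd output therefore equals its own negative, i.e. vanishes
  identically, whereas the Gram statistic is nonzero at the all-ones input.\<close>

lemma inner_d_mat_T_vec:
  "inner_d d (mat_T_vec n Q x) (mat_T_vec n K y) =
     (\<Sum>k<n. (\<Sum>l<n. (\<Sum>e<d. Q l e * K k e) * x l) * y k)"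
proof -
  have "inner_d d (mat_T_vec n Q x) (mat_T_vec n K y) =
      (\<Sum>e<d. \<Sum>k<n. \<Sum>l<n. Q l e * K k e * x l * y k)"
    by (simp add: inner_d_def mat_T_vec_def sum_distrib_left sum_distrib_right mult_ac)
  also have "\<dots> = (\<Sum>k<n. \<Sum>e<d. \<Sum>l<n. Q l e * K k e * x l * y k)"
    by (rule sum.swap)
  also have "\<dots> = (\<Sum>k<n. \<Sum>l<n. \<Sum>e<d. Q l e * K k e * x l * y k)"
    by (rule sum.cong[OF refl], rule sum.swap)
  also have "\<dots> = (\<Sum>k<n. (\<Sum>l<n. (\<Sum>e<d. Q l e * K k e) * x l) * y k)"
    by (simp add: sum_distrib_right)
  finally show ?thesis .
qed

lemma linattn_closed_form:
  "linattn N n d Q K V X j c =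
     (\<Sum>k<n. (\<Sum>i<N. mat_T_vec n V (X i) c * X i k) * (\<Sum>l<n. (\<Sum>e<d. Q l e * K k e) * X j l))"
proof -
  have "linattn N n d Q K V X j c =
      (\<Sum>i<N. \<Sum>k<n. mat_T_vec n V (X i) c * X i k * (\<Sum>l<n. (\<Sum>e<d. Q l e * K k e) * X j l))"
    by (simp add: linattn_def inner_d_mat_T_vec sum_distrib_left sum_distrib_right mult_ac)
  also have "\<dots> = (\<Sum>k<n. \<Sum>i<N. mat_T_vec n V (X i) c * X i k * (\<Sum>l<n. (\<Sum>e<d. Q l e * K k e) * X j l))"
    by (rule sum.swap)
  also have "\<dots> = (\<Sum>k<n. (\<Sum>i<N. mat_T_vec n V (X i) c * X i k) * (\<Sum>l<n. (\<Sum>e<d. Q l e * K k e) * X j l))"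
    by (simp add: sum_distrib_right)
  finally show ?thesis .
qed

lemma mat_T_vec_scale: "mat_T_vec n W (\<lambda>k. t * x k) c = t * mat_T_vec n W x c"
  by (simp add: mat_T_vec_def sum_distrib_left algebra_simps)

lemma inner_d_scale:
  "inner_d d (\<lambda>a. s * u a) (\<lambda>a. t * v a) = s * t * inner_d d u v"
  by (simp add: inner_d_def sum_distrib_left algebra_simps)

lemma linattn_scale:
  "linattn N n d Q K V (\<lambda>i k. t * X i k) j c = t ^ 3 * linattn N n d Q K V X j c"
proof -
  have "mat_T_vec n W (\<lambda>k. t * X i k) = (\<lambda>c. t * mat_T_vec n W (X i) c)" for W i
    by (rule ext) (rule mat_T_vec_scale)
  then show ?thesis
    by (simp add: linattn_def inner_d_scale sum_distrib_left power3_eq_cube algebra_simps)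
qed

lemma flip_eq_scale: "flip X = (\<lambda>i k. (-1) * X i k)"
  by (simp add: flip_def)

lemma linattn_flip: "linattn N n d Q K V (flip X) = flip (linattn N n d Q K V X)"
  by (intro ext) (simp only: flip_eq_scale linattn_scale, simp)

lemma stack_out_flip: "stack_out N n Ls (flip X) = flip (stack_out N n Ls X)"
  by (induction Ls arbitrary: n X) (simp_all add: linattn_flip)

lemma stack_out_flip_apply: "stack_out N n Ls (flip X) j c = - stack_out N n Ls X j c"
  unfolding stack_out_flip by (simp add: flip_def)

lemma flip_invariant_eq_stack_out_imp_zero:
  fixes G :: "tokens \<Rightarrow> real"
  assumes invariant: "\<And>X. G (flip X) = G X"
    and represents: "\<And>X. stack_out N n Ls X j c = G X"
  shows "G X = 0"
proof -
  have "G X = stack_out N n Ls (flip X) j c"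
    by (simp add: invariant represents)
  also have "\<dots> = - G X"
    by (simp add: stack_out_flip_apply represents)
  finally show ?thesis
    by simp
qed

theorem proposition6:
  fixes N n d m :: nat and WQ WK WV :: rmat
  shows
  \<comment> \<open>(1) closed form with M = W_Q W_K^T\<close>
  "(\<forall>X j c. j < N \<longrightarrow> c < m \<longrightarrow>
      (let M = (\<lambda>a b. \<Sum>e<d. WQ a e * WK b e) in
       linattn N n d WQ WK WV X j c =
         (\<Sum>k<n. (\<Sum>i<N. mat_T_vec n WV (X i) c * X i k) * (\<Sum>l<n. M l k * X j l))))
   \<and> \<comment> \<open>(2) oddness under the global flip\<close>
   (\<forall>X j c. j < N \<longrightarrow> c < m \<longrightarrow>
      linattn N n d WQ WK WV (flip X) j c = - linattn N n d WQ WK WV X j c)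
   \<and> \<comment> \<open>(3) no nonempty finite stack outputs a nonzero flip-invariant statistic\<close>
   (\<forall>Ls j. Ls \<noteq> [] \<longrightarrow> j < N \<longrightarrow>
      \<not> (\<exists>G :: tokens \<Rightarrow> nat \<Rightarrow> real.
            (\<forall>X. G (flip X) = G X)
          \<and> (\<exists>X c. c < final_dim n Ls \<and> G X c \<noteq> 0)
          \<and> (\<forall>X c. c < final_dim n Ls \<longrightarrow> stack_out N n Ls X j c = G X c)))
   \<and> \<comment> \<open>(4) in particular not sum_i x_i x_i^T (entry (a,b) stored at coordinate a*n+b)\<close>
   (\<forall>Ls j. Ls \<noteq> [] \<longrightarrow> j < N \<longrightarrow> 0 < n \<longrightarrow>
      \<not> (\<forall>X a b. a < n \<longrightarrow> b < n \<longrightarrow>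
            stack_out N n Ls X j (a * n + b) = (\<Sum>i<N. X i a * X i b)))"
  unfolding Let_def
  apply (intro conjI allI impI notI)
  subgoal by (rule linattn_closed_form)
  subgoal unfolding linattn_flip by (simp add: flip_def)
  subgoal for Ls j
  proof (elim exE conjE)
    fix G X c
    assume "\<forall>X. G (flip X) = G X" and "c < final_dim n Ls" and "G X c \<noteq> 0"
      and "\<forall>X c. c < final_dim n Ls \<longrightarrow> stack_out N n Ls X j c = G X c"
    then show False
      using flip_invariant_eq_stack_out_imp_zero[of "\<lambda>X. G X c" N n Ls j c X] by simp
  qed
  subgoal premises prems for Ls j
  proof -
    have "stack_out N n Ls X j 0 = (\<Sum>i<N. X i 0 * X i 0)" for X
      using prems(3) prems(4)[THEN spec[of _ X], THEN spec[of _ 0], THEN spec[of _ 0]] by simp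
    then have "(\<Sum>i<N. 1 * 1 :: real) = 0"
      using flip_invariant_eq_stack_out_imp_zero
          [of "\<lambda>X. \<Sum>i<N. X i 0 * X i 0" N n Ls j 0 "\<lambda>i k. 1"]
      by (simp add: flip_def)
    with prems(2) show False
      by simp
  qed
  done

end
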